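(* Let $\varphi_0\in\mathbb{R}$ and let $v$ be a smooth function with $v(\varphi)>0$ and $v'(\varphi)>0$ for all $\varphi\ge\varphi_0$, and suppose that $v$ grows faster than $e^{2\varphi}$ as $\varphi\to\infty$, i.e. $v(\varphi)e^{-2\varphi}\to\infty$. Then every solution of $h'=\sqrt{h^2-v}$ with initial value $h(\varphi_0)=h_0>\sqrt{v(\varphi_0)}$ reaches the curve $h=\sqrt{v(\varphi)}$ at a finite value of $\varphi$ (i.e., all solutions are of type A), and consequently there is no separatrix.
   Context: A solution of $h'=\sqrt{h^2-v}$ in $R_0=\{(\varphi,h):\varphi\ge\varphi_0,\ h>\sqrt{v(\varphi)}\}$ is of type A if it leaves $R_0$ by reaching the lower boundary $h=\sqrt{v(\varphi)}$ at a finite $\varphi$, and of type B if it remains in $R_0$ for all $\varphi>\varphi_0$. A separatrix exists only if both types occur; it is then the solution whose initial value $h(\varphi_0)$ equals the common boundary value $r$ between the initial values of type-A solutions (below $r$) and type-B solutions (above $r$). *)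

theory Defs
  imports "HOL-Analysis.Analysis"
begin

definition smooth_at_all :: "real set \<Rightarrow> (real \<Rightarrow> real) \<Rightarrow> bool" where
  "smooth_at_all S f \<longleftrightarrow>
     (\<exists>D :: nat \<Rightarrow> real \<Rightarrow> real. D 0 = f \<and>
        (\<forall>n. \<forall>x\<in>S. (D n has_real_derivative D (Suc n) x) (at x)))"

definition type_A :: "(real \<Rightarrow> real) \<Rightarrow> real \<Rightarrow> (real \<Rightarrow> real) \<Rightarrow> bool" where
  "type_A v \<phi>0 h \<longleftrightarrow>
     (\<exists>\<phi>1 > \<phi>0. continuous_on {\<phi>0..\<phi>1} h \<and> h \<phi>1 = sqrt (v \<phi>1) \<and>
        (\<forall>\<phi>\<in>{\<phi>0..<\<phi>1}. sqrt (v \<phi>) < h \<phi> \<and>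
           (h has_real_derivative sqrt ((h \<phi>)\<^sup>2 - v \<phi>)) (at \<phi> within {\<phi>0..<\<phi>1})))"

definition type_B :: "(real \<Rightarrow> real) \<Rightarrow> real \<Rightarrow> (real \<Rightarrow> real) \<Rightarrow> bool" where
  "type_B v \<phi>0 h \<longleftrightarrow>
     (\<forall>\<phi>\<ge>\<phi>0. sqrt (v \<phi>) < h \<phi> \<and>
        (h has_real_derivative sqrt ((h \<phi>)\<^sup>2 - v \<phi>)) (at \<phi> within {\<phi>0..}))"

definition separatrix_exists :: "(real \<Rightarrow> real) \<Rightarrow> real \<Rightarrow> bool" where
  "separatrix_exists v \<phi>0 \<longleftrightarrow> (\<exists>h. type_A v \<phi>0 h) \<and> (\<exists>h. type_B v \<phi>0 h)"

end

(*
  Along a solution above sqrt v we have h' = sqrt (h^2 - v) <= h, so h grows at most like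
  h(phi0) e^(phi - phi0). Since v e^(-2 phi) -> infinity, sqrt v eventually exceeds every such
  exponential, so no solution stays above sqrt v forever. The same bound drives the existence
  part: the truncated right-hand side sqrt (max (h^2 - v) 0) is nonnegative and nondecreasing in h,
  so Picard iteration from the constant h0 increases and stays below h0 e^(phi - phi0); the limit
  solves the truncated equation, must meet sqrt v, and up to its first meeting point it is a
  type-A solution.
*)
theory Submission
  imports Defs
begin

lemma le_exp_if_deriv_le_self:
  fixes h h' :: "real \<Rightarrow> real"
  assumes "c \<le> x"
    and deriv: "\<And>y. y \<in> {c..x} \<Longrightarrow> (h has_real_derivative h' y) (at y within {c..x})"
    and le_self: "\<And>y. y \<in> {c..x} \<Longrightarrow> h' y \<le> h y"
  shows "h x \<le> h c * exp (x - c)"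
proof -
  define k where "k y = h y * exp (c - y)" for y
  have "\<exists>y\<in>{c..x}. k x - k c = (*) ((h' y - h y) * exp (c - y)) (x - c)"
  proof (rule mvt_very_simple[OF \<open>c \<le> x\<close>])
    fix y assume "c \<le> y" "y \<le> x"
    then have "(k has_real_derivative (h' y - h y) * exp (c - y)) (at y within {c..x})"
      unfolding k_def by (auto intro!: derivative_eq_intros deriv simp: algebra_simps)
    then show "(k has_derivative (*) ((h' y - h y) * exp (c - y))) (at y within {c..x})"
      by (simp only: has_field_derivative_def)
  qed
  then obtain y where y: "y \<in> {c..x}" and "k x - k c = (h' y - h y) * exp (c - y) * (x - c)"
    by blast
  moreover have "(h' y - h y) * exp (c - y) * (x - c) \<le> 0"
    using le_self[OF y] \<open>c \<le> x\<close> by (intro mult_nonpos_nonneg) auto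
  ultimately have "k x \<le> k c"
    by simp
  then have "k x * exp (x - c) \<le> k c * exp (x - c)"
    by simp
  then show ?thesis
    by (simp add: k_def mult.assoc flip: exp_add)
qed

primrec picard_iter :: "(real \<Rightarrow> real \<Rightarrow> real) \<Rightarrow> real \<Rightarrow> real \<Rightarrow> nat \<Rightarrow> real \<Rightarrow> real" where
  "picard_iter f c a 0 = (\<lambda>t. a)"
| "picard_iter f c a (Suc n) = (\<lambda>t. a + integral {c..t} (\<lambda>s. f s (picard_iter f c a n s)))"

lemma picard_iter_init [simp]: "picard_iter f c a n c = a"
  by (cases n) simp_all

(* The right-hand side sqrt (max (x^2 - v) 0) is not Lipschitz where x^2 = v, so existence
   comes from monotonicity of the iteration rather than from a contraction argument. *)
locale monotone_picard =
  fixes f :: "real \<Rightarrow> real \<Rightarrow> real" and c T a :: real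
  assumes continuous: "continuous_on ({c..T} \<times> UNIV) (\<lambda>(s, x). f s x)"
    and nonneg: "\<And>s x. 0 \<le> f s x"
    and mono: "\<And>s x y. s \<in> {c..T} \<Longrightarrow> a \<le> x \<Longrightarrow> x \<le> y \<Longrightarrow> f s x \<le> f s y"
    and le_self: "\<And>s x. s \<in> {c..T} \<Longrightarrow> a \<le> x \<Longrightarrow> f s x \<le> x"
    and init_nonneg: "0 \<le> a"
begin

abbreviation iter :: "nat \<Rightarrow> real \<Rightarrow> real" where
  "iter \<equiv> picard_iter f c a"

lemma continuous_on_superposition:
  assumes "continuous_on {c..T} y"
  shows "continuous_on {c..T} (\<lambda>s. f s (y s))"
proof -
  have "continuous_on {c..T} (\<lambda>s. (s, y s))"
    using assms by (intro continuous_intros)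
  from continuous_on_compose2[OF continuous this]
  show ?thesis
    by auto
qed

lemma integrable_superposition:
  assumes "continuous_on {c..T} y" "t \<in> {c..T}"
  shows "(\<lambda>s. f s (y s)) integrable_on {c..t}"
  using assms
  by (intro integrable_continuous_interval continuous_on_subset[OF continuous_on_superposition]) auto

lemma continuous_on_iter: "continuous_on {c..T} (iter n)"
proof (induction n)
  case (Suc n)
  have "(\<lambda>s. f s (iter n s)) integrable_on {c..T}"
    using Suc by (intro integrable_continuous_interval continuous_on_superposition)
  from indefinite_integral_continuous_1[OF this]
  show ?case
    by (simp add: continuous_on_add)
qed simp

lemma iter_has_derivative:
  assumes "t \<in> {c..T}"
  shows "(iter (Suc n) has_real_derivative f t (iter n t)) (at t within {c..T})"
  using integral_has_real_derivative[OF continuous_on_superposition[OF continuous_on_iter] assms]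
  by (auto intro!: derivative_eq_intros)

lemma iter_ge_init:
  assumes "t \<in> {c..T}"
  shows "a \<le> iter n t"
proof (cases n)
  case (Suc m)
  have "0 \<le> integral {c..t} (\<lambda>s. f s (iter m s))"
    by (intro integral_nonneg integrable_superposition[OF continuous_on_iter assms] nonneg)
  with Suc show ?thesis
    by simp
qed simp

lemma iter_le_Suc:
  assumes "t \<in> {c..T}"
  shows "iter n t \<le> iter (Suc n) t"
  using assms
proof (induction n arbitrary: t)
  case 0
  then show ?case
    using iter_ge_init[of t 1] by simp
next
  case (Suc n)
  have "integral {c..t} (\<lambda>s. f s (iter n s)) \<le> integral {c..t} (\<lambda>s. f s (iter (Suc n) s))"
    using Suc.prems
    by (intro integral_le integrable_superposition[OF continuous_on_iter] mono iter_ge_init Suc.IH) auto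
  then show ?case
    by simp
qed

lemma iter_le_exp:
  assumes "t \<in> {c..T}"
  shows "iter n t \<le> a * exp (t - c)"
proof (cases n)
  case 0
  then show ?thesis
    using assms init_nonneg by (simp add: mult_le_cancel_left1)
next
  case (Suc m)
  have "iter (Suc m) t \<le> iter (Suc m) c * exp (t - c)"
  proof (rule le_exp_if_deriv_le_self)
    fix y assume y: "y \<in> {c..t}"
    then have "y \<in> {c..T}"
      using assms by auto
    show "(iter (Suc m) has_real_derivative f y (iter m y)) (at y within {c..t})"
      by (rule DERIV_subset[OF iter_has_derivative[OF \<open>y \<in> {c..T}\<close>]]) (use assms in auto)
    have "f y (iter m y) \<le> iter m y"
      by (intro le_self iter_ge_init \<open>y \<in> {c..T}\<close>)
    also have "\<dots> \<le> iter (Suc m) y"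
      by (rule iter_le_Suc[OF \<open>y \<in> {c..T}\<close>])
    finally show "f y (iter m y) \<le> iter (Suc m) y" .
  qed (use assms in auto)
  with Suc show ?thesis
    by simp
qed

definition sol :: "real \<Rightarrow> real" where
  "sol t = (SUP n. iter n t)"

lemma iter_tendsto_sol:
  assumes "t \<in> {c..T}"
  shows "(\<lambda>n. iter n t) \<longlonglongrightarrow> sol t"
  unfolding sol_def
proof (rule LIMSEQ_incseq_SUP)
  show "bdd_above (range (\<lambda>n. iter n t))"
    using iter_le_exp[OF assms] by (intro bdd_aboveI) auto
  show "incseq (\<lambda>n. iter n t)"
    using iter_le_Suc[OF assms] by (intro incseq_SucI)
qed

lemma sol_init: "sol c = a"
  by (simp add: sol_def)

lemma sol_le_exp:
  assumes "t \<in> {c..T}"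
  shows "sol t \<le> a * exp (t - c)"
  using iter_tendsto_sol[OF assms] iter_le_exp[OF assms] by (intro LIMSEQ_le_const2) auto


lemma sol_integral_equation:
  assumes t: "t \<in> {c..T}"
  shows "(\<lambda>s. f s (sol s)) integrable_on {c..t}"
    and "sol t = a + integral {c..t} (\<lambda>s. f s (sol s))"
proof -
  have sub: "s \<in> {c..T}" if "s \<in> {c..t}" for s
    using that t by auto
  have bound: "norm (f s (iter k s)) \<le> a * exp (s - c)" if "s \<in> {c..t}" for k s
  proof -
    have "f s (iter k s) \<le> iter k s"
      by (intro le_self iter_ge_init sub that)
    also have "\<dots> \<le> a * exp (s - c)"
      by (intro iter_le_exp sub that)
    finally show ?thesis
      using nonneg by simp
  qed
  have conv: "(\<lambda>k. f s (iter k s)) \<longlonglongrightarrow> f s (sol s)" if "s \<in> {c..t}" for s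
  proof -
    have "(\<lambda>k. (s, iter k s)) \<longlonglongrightarrow> (s, sol s)"
      by (intro tendsto_intros iter_tendsto_sol sub that)
    from continuous_on_tendsto_compose[OF continuous this]
    show ?thesis
      using sub[OF that] by simp
  qed
  have "(\<lambda>s. a * exp (s - c)) integrable_on {c..t}"
    by (intro integrable_continuous_interval continuous_intros)
  note dominated = dominated_convergence[OF integrable_superposition[OF continuous_on_iter t] this bound conv]
  show "(\<lambda>s. f s (sol s)) integrable_on {c..t}"
    by (rule dominated(1))
  have "(\<lambda>k. integral {c..t} (\<lambda>s. f s (iter k s))) \<longlonglongrightarrow> integral {c..t} (\<lambda>s. f s (sol s))"
    by (rule dominated(2))
  then have "(\<lambda>k. iter (Suc k) t) \<longlonglongrightarrow> a + integral {c..t} (\<lambda>s. f s (sol s))"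
    by (simp add: tendsto_add_const_iff)
  moreover have "(\<lambda>k. iter (Suc k) t) \<longlonglongrightarrow> sol t"
    using iter_tendsto_sol[OF t] by (rule LIMSEQ_Suc)
  ultimately show "sol t = a + integral {c..t} (\<lambda>s. f s (sol s))"
    by (rule LIMSEQ_unique[rotated])
qed

lemma continuous_on_sol: "continuous_on {c..T} sol"
proof (cases "c \<le> T")
  case True
  have "continuous_on {c..T} (\<lambda>t. a + integral {c..t} (\<lambda>s. f s (sol s)))"
    using True sol_integral_equation(1)[of T]
    by (intro continuous_intros indefinite_integral_continuous_1) auto
  then show ?thesis
    by (rule continuous_on_eq) (simp add: sol_integral_equation(2))
qed simp

lemma sol_has_derivative:
  assumes "t \<in> {c..T}"
  shows "(sol has_real_derivative f t (sol t)) (at t within {c..T})"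
proof -
  have "((\<lambda>x. a + integral {c..x} (\<lambda>s. f s (sol s))) has_real_derivative f t (sol t)) (at t within {c..T})"
    using integral_has_real_derivative[OF continuous_on_superposition[OF continuous_on_sol] assms]
    by (auto intro!: derivative_eq_intros)
  then show ?thesis
    by (rule has_field_derivative_transform_within[where d = 1])
      (use assms in \<open>auto simp: sol_integral_equation(2)\<close>)
qed

end

lemma first_zero_crossing:
  fixes d :: "real \<Rightarrow> real"
  assumes cont: "continuous_on {c..T} d" and "0 < d c" and "d T \<le> 0" and "c \<le> T"
  obtains p where "p \<in> {c<..T}" and "d p = 0" and "\<And>t. t \<in> {c..<p} \<Longrightarrow> 0 < d t"
proof -
  define H where "H = {c..T} \<inter> d -` {..0}"
  have "closed H"
    unfolding H_def using cont by (rule continuous_closed_preimage) auto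
  moreover have "T \<in> H" and bdd: "bdd_below H"
    using assms by (auto simp: H_def intro: bdd_belowI[of _ c])
  ultimately have "Inf H \<in> H"
    by (intro closed_contains_Inf) auto
  define p where "p = Inf H"
  have p: "p \<in> {c..T}" "d p \<le> 0"
    using \<open>Inf H \<in> H\<close> by (auto simp: H_def p_def)
  have below: "0 < d t" if "t \<in> {c..<p}" for t
  proof (rule ccontr)
    assume "\<not> 0 < d t"
    with that p have "t \<in> H"
      by (auto simp: H_def)
    then have "p \<le> t"
      unfolding p_def using bdd by (rule cInf_lower)
    with that show False
      by auto
  qed
  have "c < p"
    using p \<open>0 < d c\<close> by (cases "p = c") auto
  obtain x where x: "c \<le> x" "x \<le> p" "d x = 0"
    using IVT2'[of d p 0 c] p \<open>0 < d c\<close> continuous_on_subset[OF cont, of "{c..p}"] by auto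
  with below have "x = p"
    by force
  show thesis
    using \<open>c < p\<close> p x \<open>x = p\<close> below by (intro that) auto
qed

lemma type_A_solution_exists:
  fixes v :: "real \<Rightarrow> real"
  assumes v_cont: "continuous_on {c..T} v"
    and v_nonneg: "\<And>s. s \<in> {c..T} \<Longrightarrow> 0 \<le> v s"
    and above: "sqrt (v c) < a"
    and crossing: "a * exp (T - c) \<le> sqrt (v T)"
    and "c \<le> T"
  shows "\<exists>h. h c = a \<and> type_A v c h"
proof -
  define f where "f s x = sqrt (max (x\<^sup>2 - v s) 0)" for s x
  have "0 \<le> sqrt (v c)"
    using v_nonneg[of c] \<open>c \<le> T\<close> by simp
  with above have "0 \<le> a"
    by linarith
  interpret monotone_picard f c T a
  proof
    have "continuous_on ({c..T} \<times> UNIV) (\<lambda>p. v (fst p))"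
      by (rule continuous_on_compose2[OF v_cont continuous_on_fst]) auto
    then show "continuous_on ({c..T} \<times> UNIV) (\<lambda>(s, x). f s x)"
      unfolding f_def case_prod_beta by (intro continuous_intros)
  next
    fix s x y :: real
    assume "s \<in> {c..T}" "a \<le> x"
    with \<open>0 \<le> a\<close> v_nonneg[of s] show "f s x \<le> x"
      unfolding f_def by (auto intro: real_le_lsqrt)
    assume "x \<le> y"
    with \<open>a \<le> x\<close> \<open>0 \<le> a\<close> have "x\<^sup>2 \<le> y\<^sup>2"
      by (intro power_mono) auto
    then show "f s x \<le> f s y"
      unfolding f_def by (intro real_sqrt_le_mono) auto
  qed (use \<open>0 \<le> a\<close> in \<open>simp_all add: f_def\<close>)
  define d where "d t = sol t - sqrt (v t)" for t
  have d_cont: "continuous_on {c..T} d"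
    unfolding d_def using continuous_on_sol v_cont by (intro continuous_intros)
  have "0 < d c" and "d T \<le> 0"
    using above crossing sol_le_exp[of T] \<open>c \<le> T\<close> by (auto simp: d_def sol_init)
  then obtain p where p: "p \<in> {c<..T}" "d p = 0" and below: "\<And>t. t \<in> {c..<p} \<Longrightarrow> 0 < d t"
    using first_zero_crossing[OF d_cont _ _ \<open>c \<le> T\<close>] by blast
  have "type_A v c sol"
    unfolding type_A_def
  proof (intro exI conjI ballI)
    show "c < p" "sol p = sqrt (v p)" "continuous_on {c..p} sol"
      using p continuous_on_subset[OF continuous_on_sol] by (auto simp: d_def)
    fix t assume t: "t \<in> {c..<p}"
    then show "sqrt (v t) < sol t"
      using below[OF t] by (simp add: d_def)
    then have "v t \<le> (sol t)\<^sup>2"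
      by (intro sqrt_le_D less_imp_le)
    have "f t (sol t) = sqrt (max ((sol t)\<^sup>2 - v t) 0)"
      by (fact f_def)
    also have "\<dots> = sqrt ((sol t)\<^sup>2 - v t)"
      using \<open>v t \<le> (sol t)\<^sup>2\<close> by simp
    finally have "f t (sol t) = sqrt ((sol t)\<^sup>2 - v t)" .
    moreover have "(sol has_real_derivative f t (sol t)) (at t within {c..<p})"
      using t p by (intro DERIV_subset[OF sol_has_derivative]) auto
    ultimately show "(sol has_real_derivative sqrt ((sol t)\<^sup>2 - v t)) (at t within {c..<p})"
      by simp
  qed
  then show ?thesis
    using sol_init by blast
qed

lemma eventually_exp_less_sqrt:
  fixes v :: "real \<Rightarrow> real"
  assumes "filterlim (\<lambda>\<phi>. v \<phi> * exp (- 2 * \<phi>)) at_top at_top"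
  shows "eventually (\<lambda>x. a * exp (x - c) < sqrt (v x)) at_top"
  using assms[unfolded filterlim_at_top_dense, rule_format, of "a\<^sup>2 * exp (- 2 * c)"]
proof (rule eventually_mono)
  fix x assume "a\<^sup>2 * exp (- 2 * c) < v x * exp (- 2 * x)"
  then have "a\<^sup>2 * exp (- 2 * c) * exp (2 * x) < v x * exp (- 2 * x) * exp (2 * x)"
    by simp
  then have "(a * exp (x - c))\<^sup>2 < v x"
    by (simp add: power2_eq_square algebra_simps flip: exp_add)
  then show "a * exp (x - c) < sqrt (v x)"
    by (rule real_less_rsqrt)
qed

lemma not_type_B:
  fixes v h :: "real \<Rightarrow> real"
  assumes v_nonneg: "\<And>\<phi>. c \<le> \<phi> \<Longrightarrow> 0 \<le> v \<phi>"
    and growth: "filterlim (\<lambda>\<phi>. v \<phi> * exp (- 2 * \<phi>)) at_top at_top"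
  shows "\<not> type_B v c h"
proof
  assume "type_B v c h"
  then have above: "\<And>\<phi>. c \<le> \<phi> \<Longrightarrow> sqrt (v \<phi>) < h \<phi>"
    and deriv: "\<And>\<phi>. c \<le> \<phi> \<Longrightarrow> (h has_real_derivative sqrt ((h \<phi>)\<^sup>2 - v \<phi>)) (at \<phi> within {c..})"
    unfolding type_B_def by auto
  obtain T where "c \<le> T" and T: "h c * exp (T - c) < sqrt (v T)"
    using eventually_exp_less_sqrt[OF growth, of "h c" c] eventually_ge_at_top[of c]
    by (metis (mono_tags, lifting) eventually_conj eventually_happens' trivial_limit_at_top_linorder)
  have "h T \<le> h c * exp (T - c)"
  proof (rule le_exp_if_deriv_le_self[OF \<open>c \<le> T\<close>])
    fix \<phi> assume "\<phi> \<in> {c..T}"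
    then show "(h has_real_derivative sqrt ((h \<phi>)\<^sup>2 - v \<phi>)) (at \<phi> within {c..T})"
      by (intro DERIV_subset[OF deriv]) auto
    have "0 \<le> sqrt (v \<phi>)"
      using v_nonneg[of \<phi>] \<open>\<phi> \<in> {c..T}\<close> by simp
    moreover have "sqrt (v \<phi>) < h \<phi>"
      using above \<open>\<phi> \<in> {c..T}\<close> by simp
    ultimately have "0 \<le> h \<phi>"
      by linarith
    then show "sqrt ((h \<phi>)\<^sup>2 - v \<phi>) \<le> h \<phi>"
      using v_nonneg[of \<phi>] \<open>\<phi> \<in> {c..T}\<close> by (auto intro: real_le_lsqrt)
  qed
  with T above[OF \<open>c \<le> T\<close>] show False
    by simp
qed

lemma smooth_at_all_imp_continuous_on:
  assumes "smooth_at_all S f"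
  shows "continuous_on S f"
proof -
  obtain D where D: "D 0 = f" "\<forall>n. \<forall>x\<in>S. (D n has_real_derivative D (Suc n) x) (at x)"
    using assms unfolding smooth_at_all_def by blast
  have "isCont f x" if "x \<in> S" for x
  proof -
    have "(D 0 has_real_derivative D (Suc 0) x) (at x)"
      using D(2) that by blast
    with D(1) show ?thesis
      by (metis DERIV_isCont)
  qed
  then show ?thesis
    by (rule continuous_at_imp_continuous_on[rule_format])
qed

theorem proposition5:
  fixes v :: "real \<Rightarrow> real" and \<phi>0 :: real
  assumes smooth: "smooth_at_all {\<phi>0..} v"
    and pos: "\<And>\<phi>. \<phi> \<ge> \<phi>0 \<Longrightarrow> v \<phi> > 0"
    and incr: "\<And>\<phi>. \<phi> \<ge> \<phi>0 \<Longrightarrow> deriv v \<phi> > 0"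
    and growth: "filterlim (\<lambda>\<phi>. v \<phi> * exp (- 2 * \<phi>)) at_top at_top"
  shows "(\<forall>h0 > sqrt (v \<phi>0).
            (\<exists>h. h \<phi>0 = h0 \<and> type_A v \<phi>0 h) \<and>
            \<not> (\<exists>h. h \<phi>0 = h0 \<and> type_B v \<phi>0 h))
         \<and> \<not> separatrix_exists v \<phi>0"
proof -
  have v_cont: "continuous_on {\<phi>0..} v"
    using smooth by (rule smooth_at_all_imp_continuous_on)
  have v_nonneg: "\<And>\<phi>. \<phi>0 \<le> \<phi> \<Longrightarrow> 0 \<le> v \<phi>"
    using pos less_imp_le by blast
  have no_B: "\<not> type_B v \<phi>0 h" for h
    using v_nonneg growth by (rule not_type_B)
  have A: "\<exists>h. h \<phi>0 = h0 \<and> type_A v \<phi>0 h" if "sqrt (v \<phi>0) < h0" for h0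
  proof -
    obtain T where "\<phi>0 \<le> T" and "h0 * exp (T - \<phi>0) < sqrt (v T)"
      using eventually_exp_less_sqrt[OF growth, of h0 \<phi>0] eventually_ge_at_top[of \<phi>0]
      by (metis (mono_tags, lifting) eventually_conj eventually_happens' trivial_limit_at_top_linorder)
    then show ?thesis
      using that v_nonneg continuous_on_subset[OF v_cont, of "{\<phi>0..T}"]
      by (intro type_A_solution_exists) auto
  qed
  show ?thesis
    unfolding separatrix_exists_def using A no_B by blast
qed

end
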